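(* Let $A,W\in \mathbb{C}^{n\times n}$ and $m\in \mathbb{N}$. Then $(WA)^m+I_n-WAWA^{\mathrm{cEP},W}$ is invertible.
   Context: $\mathbb{C}^{n\times n}$ carries the conjugate transpose involution. With $k=\max\{\mathrm{ind}(AW),\mathrm{ind}(WA)\}$ (Drazin indices), the weighted core-EP inverse $A^{\mathrm{cEP},W}$ of $A$ is the unique $X$ with $WAWX=(WA)^k[(WA)^k]^{\dagger}$ and $\mathcal{R}(X)\subseteq\mathcal{R}((AW)^k)$, where $\dagger$ is the Moore–Penrose inverse and $\mathcal{R}$ the range. *)

theory Defs
  imports "HOL-Analysis.Analysis"
begin

text \<open>Square complex matrices of size n are modelled as complex^'n^'n
  (the size n = CARD('n) is arbitrary, fixed by the type).\<close>

primrec mpow :: "complex^'n^'n \<Rightarrow> nat \<Rightarrow> complex^'n^'n" where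
  "mpow M 0 = mat 1"
| "mpow M (Suc k) = M ** mpow M k"

definition cadj :: "complex^'n^'m \<Rightarrow> complex^'m^'n" where
  "cadj M = (\<chi> i j. cnj (M $ j $ i))"

definition mrange :: "complex^'n^'m \<Rightarrow> (complex^'m) set" where
  "mrange M = range (\<lambda>x. M *v x)"

definition moore_penrose :: "complex^'n^'m \<Rightarrow> complex^'m^'n" where
  "moore_penrose A = (THE X. A ** X ** A = A \<and> X ** A ** X = X
      \<and> cadj (A ** X) = A ** X \<and> cadj (X ** A) = X ** A)"

definition drazin_index :: "complex^'n^'n \<Rightarrow> nat" where
  "drazin_index M = (LEAST k. rank (mpow M k) = rank (mpow M (Suc k)))"

definition wcep_inverse :: "complex^'n^'n \<Rightarrow> complex^'n^'n \<Rightarrow> complex^'n^'n" where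
  "wcep_inverse A W =
    (let k = max (drazin_index (A ** W)) (drazin_index (W ** A))
     in THE X. W ** A ** W ** X = mpow (W ** A) k ** moore_penrose (mpow (W ** A) k)
            \<and> mrange X \<subseteq> mrange (mpow (A ** W) k))"

end

theory Submission
  imports Defs
begin

(*
  Write B = WA and let k bound the Drazin indices of AW and WA. Equal ranks of B^k and B^(k+1)
  give factorisations B^k = Z B^(k+j) = B^(k+j) Y, so B^m is injective on R(B^k) and
  R(B^k) = R(B^(k+j)). With these, the two conditions defining the weighted core-EP inverse
  determine W A W A^{cEP,W} = B^k (B^k)^+ =: P, an idempotent whose range R(B^k) is B-invariant.
  If (B^m + I - P) x = 0, then v = (I - P) x satisfies ((I - P) B)^m v = -v, and (I - P) B is
  nilpotent because (I - P) B^k = 0, so v = 0. Hence x = P x lies in R(B^k) and B^m x = 0,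
  which forces x = 0.
*)

lemma matrix_diff_ldistrib: "(A::'a::ring_1^'n^'m) ** (B - C) = A ** B - A ** C"
  by (vector matrix_matrix_mult_def sum_subtractf right_diff_distrib)

lemma matrix_diff_rdistrib: "((B::'a::ring_1^'n^'m) - C) ** A = B ** A - C ** A"
  by (vector matrix_matrix_mult_def sum_subtractf left_diff_distrib)

lemma matrix_vector_mult_uminus: "(A::'a::ring_1^'n^'m) *v (- x) = - (A *v x)"
  by (simp add: vec_eq_iff matrix_vector_mult_def sum_negf)

lemma mpow_add: "mpow M (i + j) = mpow M i ** mpow M j"
  by (induction i) (simp_all add: matrix_mul_assoc)

lemma mpow_Suc_right: "mpow M (Suc k) = mpow M k ** M"
  using mpow_add[of M k 1] by simp

lemma mpow_mult: "mpow M (i * j) = mpow (mpow M i) j"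
  by (induction j) (simp_all add: mpow_add)

lemma mpow_eq_0_mono: "mpow M j = 0 \<Longrightarrow> j \<le> i \<Longrightarrow> mpow M i = 0"
  by (metis le_add_diff_inverse2 mpow_add times0_right)

lemma mpow_mul_swap: "W ** mpow (A ** W) j = mpow (W ** A) j ** W"
proof (induction j)
  case (Suc j)
  have "W ** mpow (A ** W) (Suc j) = W ** A ** (W ** mpow (A ** W) j)"
    by (simp add: matrix_mul_assoc)
  then show ?case by (simp add: Suc matrix_mul_assoc)
qed simp

lemma transpose_mpow: "transpose (mpow M k) = mpow (transpose M) k"
  by (induction k) (simp_all add: matrix_transpose_mul flip: mpow_Suc_right)

section \<open>Conjugate transpose and the Moore--Penrose inverse\<close>

lemma cadj_matrix_mul: "cadj (X ** Y) = cadj Y ** cadj X"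
  by (simp add: cadj_def matrix_matrix_mult_def vec_eq_iff mult.commute)

lemma cadj_cadj [simp]: "cadj (cadj X) = X"
  by (simp add: cadj_def vec_eq_iff)

lemma cadj_mul_self_zeroD:
  assumes "cadj X ** X = 0"
  shows "X = (0::complex^'n^'m)"
proof -
  have norm: "cnj z * z = complex_of_real ((cmod z)\<^sup>2)" for z
    using complex_norm_square[of z] by (simp add: mult.commute)
  have "X $ i $ j = 0" for i j
  proof -
    have "(\<Sum>l\<in>UNIV. cnj (X $ l $ j) * X $ l $ j) = (cadj X ** X) $ j $ j"
      by (simp add: cadj_def matrix_matrix_mult_def)
    also have "\<dots> = 0"
      using assms by simp
    finally have "(\<Sum>l\<in>UNIV. complex_of_real ((cmod (X $ l $ j))\<^sup>2)) = 0"
      by (simp add: norm)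
    then have "(\<Sum>l\<in>UNIV. (cmod (X $ l $ j))\<^sup>2) = 0"
      by (simp only: of_real_sum[symmetric] of_real_eq_0_iff)
    then show ?thesis by (simp add: sum_nonneg_eq_0_iff)
  qed
  then show ?thesis by (simp add: vec_eq_iff)
qed

lemma cadj_mul_self_cancel_left:
  assumes "cadj A ** A ** U = cadj A ** A ** V"
  shows "A ** U = (A::complex^'n^'m) ** V"
proof -
  have "cadj (A ** (U - V)) ** (A ** (U - V)) = cadj (U - V) ** (cadj A ** A ** (U - V))"
    by (simp add: cadj_matrix_mul matrix_mul_assoc)
  also have "\<dots> = 0"
    using assms by (simp add: matrix_diff_ldistrib)
  finally have "A ** (U - V) = 0"
    by (rule cadj_mul_self_zeroD)
  then show ?thesis
    by (simp add: matrix_diff_ldistrib)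
qed

lemma inner_inverse_exists: "\<exists>G. M ** G ** M = (M::'a::field^'n^'m)"
proof -
  obtain g where g: "Vector_Spaces.linear (*s) (*s) g" "\<forall>v\<in>range ((*v) M). M *v g v = v"
    using vec.linear_exists_right_inverse_on[OF matrix_vector_mul_linear_gen vec.subspace_UNIV, of M]
    by auto
  have "M ** matrix g ** M = M"
    unfolding matrix_eq using g by (simp add: matrix_vector_mul_assoc[symmetric] matrix_works)
  then show ?thesis by blast
qed

text \<open>The witness is \<open>L = G A\<^sup>*\<close> for an inner inverse \<open>G\<close> of \<open>A\<^sup>* A\<close>.\<close>

lemma hermitian_inner_inverse_exists:
  "\<exists>L. A ** L ** A = A \<and> cadj (A ** L) = A ** (L::complex^'m^'n)"
proof -
  obtain G where G: "cadj A ** A ** G ** (cadj A ** A) = cadj A ** (A::complex^'n^'m)"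
    using inner_inverse_exists by blast
  have "cadj A ** A ** (G ** cadj A ** A) = cadj A ** A ** mat 1"
    using G by (simp add: matrix_mul_assoc)
  then have "A ** (G ** cadj A ** A) = A ** mat 1"
    by (rule cadj_mul_self_cancel_left)
  then have AGA: "A ** G ** cadj A ** A = A"
    by (simp add: matrix_mul_assoc)
  have AGA': "cadj A ** A ** cadj G ** cadj A = cadj A"
    using arg_cong[OF AGA, of cadj] by (simp add: cadj_matrix_mul matrix_mul_assoc)
  have "A ** G ** cadj A = A ** G ** (cadj A ** A ** cadj G ** cadj A)"
    by (simp add: AGA')
  also have "\<dots> = (A ** G ** cadj A ** A) ** cadj G ** cadj A"
    by (simp add: matrix_mul_assoc)
  finally have "A ** G ** cadj A = A ** cadj G ** cadj A"
    by (simp add: AGA)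
  then have "cadj (A ** (G ** cadj A)) = A ** (G ** cadj A)"
    by (simp add: cadj_matrix_mul matrix_mul_assoc)
  moreover have "A ** (G ** cadj A) ** A = A"
    using AGA by (simp add: matrix_mul_assoc)
  ultimately show ?thesis by blast
qed

definition penrose_inverse :: "complex^'n^'m \<Rightarrow> complex^'m^'n \<Rightarrow> bool" where
  "penrose_inverse A X \<longleftrightarrow> A ** X ** A = A \<and> X ** A ** X = X
      \<and> cadj (A ** X) = A ** X \<and> cadj (X ** A) = X ** A"

lemma penrose_inverse_exists: "\<exists>X. penrose_inverse A X"
proof -
  obtain L where L: "A ** L ** A = A" "cadj (A ** L) = A ** L"
    using hermitian_inner_inverse_exists by blast
  obtain L' where L': "cadj A ** L' ** cadj A = cadj A" "cadj (cadj A ** L') = cadj A ** L'"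
    using hermitian_inner_inverse_exists by blast
  define K where "K = cadj L'"
  have AKA: "A ** K ** A = A"
    using arg_cong[OF L'(1), of cadj] by (simp add: K_def cadj_matrix_mul matrix_mul_assoc)
  have KA: "K ** A = cadj A ** L'"
    using L'(2) by (simp add: K_def cadj_matrix_mul)
  define X where "X = K ** A ** L"
  have "A ** X ** A = A"
    using AKA L(1) by (simp add: X_def matrix_mul_assoc)
  moreover have "X ** A ** X = X"
  proof -
    have "X ** A ** X = K ** (A ** L ** A) ** (K ** A) ** L"
      by (simp add: X_def matrix_mul_assoc)
    also have "\<dots> = K ** (A ** K ** A) ** L"
      by (simp add: L(1) matrix_mul_assoc)
    finally show ?thesis
      by (simp add: AKA X_def)
  qed
  moreover have "A ** X = A ** L"
    using AKA by (simp add: X_def matrix_mul_assoc)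
  moreover have "X ** A = K ** A"
    using L(1) by (simp add: X_def matrix_mul_assoc[symmetric])
  ultimately show ?thesis
    unfolding penrose_inverse_def using L(2) L'(2) KA by metis
qed

lemma penrose_inverse_unique:
  assumes "penrose_inverse A X" and "penrose_inverse A Y"
  shows "X = Y"
proof -
  have X: "A ** X ** A = A" "X ** A ** X = X" "cadj (A ** X) = A ** X" "cadj (X ** A) = X ** A"
    and Y: "A ** Y ** A = A" "Y ** A ** Y = Y" "cadj (A ** Y) = A ** Y" "cadj (Y ** A) = Y ** A"
    using assms by (auto simp: penrose_inverse_def)
  have "X = X ** (A ** X)"
    using X(2) by (simp add: matrix_mul_assoc)
  also have "\<dots> = X ** cadj X ** cadj (A ** Y ** A)"
    using X(3) Y(1) by (metis cadj_matrix_mul matrix_mul_assoc)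
  also have "\<dots> = X ** (cadj X ** cadj A) ** (cadj Y ** cadj A)"
    by (simp add: cadj_matrix_mul matrix_mul_assoc)
  also have "\<dots> = X ** (A ** X) ** (A ** Y)"
    using X(3) Y(3) by (simp add: cadj_matrix_mul)
  also have "\<dots> = X ** A ** Y"
    using X(2) by (simp add: matrix_mul_assoc)
  finally have XAY: "X = X ** A ** Y" .
  have "Y = (Y ** A) ** Y"
    using Y(2) by (simp add: matrix_mul_assoc)
  also have "\<dots> = cadj (A ** X ** A) ** cadj Y ** Y"
    using Y(4) X(1) by (metis cadj_matrix_mul)
  also have "\<dots> = (cadj A ** cadj X) ** (cadj A ** cadj Y) ** Y"
    by (simp add: cadj_matrix_mul matrix_mul_assoc)
  also have "\<dots> = (X ** A) ** (Y ** A) ** Y"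
    using X(4) Y(4) by (simp add: cadj_matrix_mul)
  also have "\<dots> = X ** A ** (Y ** A ** Y)"
    by (simp add: matrix_mul_assoc)
  also have "\<dots> = X ** A ** Y"
    using Y(2) by simp
  finally show ?thesis
    using XAY by simp
qed

lemma moore_penrose_inner: "A ** moore_penrose A ** A = A"
proof -
  have "\<exists>!X. penrose_inverse A X"
    using penrose_inverse_exists penrose_inverse_unique by blast
  then have "penrose_inverse A (moore_penrose A)"
    unfolding moore_penrose_def penrose_inverse_def by (rule theI')
  then show ?thesis
    by (simp add: penrose_inverse_def)
qed

section \<open>Ranges, rank and the Drazin index\<close>

lemma range_matrix_mul_subset: "range ((*v) (A ** B)) \<subseteq> range ((*v) A)"
  by (auto simp: matrix_vector_mul_assoc[symmetric])

lemma matrix_vector_mult_axis: "((X::'a::semiring_1^'n^'m) *v axis j 1) = column j X"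
  by (simp add: vec_eq_iff column_def matrix_vector_mult_def axis_def if_distrib if_distribR
      cong: if_cong)

lemma range_subset_imp_factor:
  assumes "range ((*v) (X::'a::semiring_1^'p^'m)) \<subseteq> range ((*v) (N::'a^'q^'m))"
  shows "\<exists>Z. X = N ** Z"
proof -
  have "\<forall>j. \<exists>z. N *v z = X *v axis j 1"
    using assms by (metis imageE rangeI subset_eq)
  then obtain f where f: "\<And>j. N *v f j = column j X"
    by (metis matrix_vector_mult_axis)
  have "X = N ** (\<chi> i j. f j $ i)"
    using f by (simp add: vec_eq_iff column_def matrix_matrix_mult_def matrix_vector_mult_def)
  then show ?thesis ..
qed

lemma subspace_range_matrix_vector_mult: "vec.subspace (range ((*v) (A::'a::field^'n^'m)))"
  using vec.subspace_image[OF vec.subspace_UNIV] matrix_vector_mul_linear_gen by blast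

lemma span_columns: "vec.span (columns (A::'a::field^'n^'m)) = range ((*v) A)"
proof
  show "range ((*v) A) \<subseteq> vec.span (columns A)"
    using matrix_vector_mult_in_columnspace_gen by blast
  have "columns A \<subseteq> range ((*v) A)"
    by (auto simp: columns_def simp flip: matrix_vector_mult_axis)
  then show "vec.span (columns A) \<subseteq> range ((*v) A)"
    using subspace_range_matrix_vector_mult by (rule vec.span_minimal)
qed

lemma dim_range_mul_ge_imp_factor:
  fixes A :: "'a::field^'n^'m" and B :: "'a^'p^'n"
  assumes "vec.dim (range ((*v) A)) \<le> vec.dim (range ((*v) (A ** B)))"
  shows "\<exists>Y. A = A ** B ** Y"
proof -
  have "range ((*v) (A ** B)) = range ((*v) A)"
    using subspace_range_matrix_vector_mult subspace_range_matrix_vector_mult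
      range_matrix_mul_subset assms
    by (rule vec.subspace_dim_equal)
  then show ?thesis
    by (simp add: range_subset_imp_factor)
qed

lemma rank_eq_dim_range_transpose: "rank (A::'a::field^'n^'m) = vec.dim (range ((*v) (transpose A)))"
  by (metis row_rank_def_gen columns_transpose span_columns vec.dim_span)

lemma rank_mpow_Suc_le: "rank (mpow M (Suc k)) \<le> rank (mpow M k)"
  unfolding rank_eq_dim_range_transpose transpose_mpow unfolding mpow_Suc_right
  by (rule vec.dim_subset[OF range_matrix_mul_subset])

lemma rank_mpow_drazin_index:
  "rank (mpow M (drazin_index M)) = rank (mpow M (Suc (drazin_index M)))"
proof -
  have "\<exists>k. rank (mpow M k) = rank (mpow M (Suc k))"
  proof (rule ccontr)
    assume "\<not> ?thesis"
    then have decreasing: "rank (mpow M (Suc k)) < rank (mpow M k)" for k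
      using rank_mpow_Suc_le le_neq_implies_less by metis
    have "rank (mpow M k) + k \<le> rank (mpow M 0)" for k
    proof (induction k)
      case (Suc k)
      then show ?case using decreasing[of k] by linarith
    qed simp
    from this[of "Suc (rank (mpow M 0))"] show False by simp
  qed
  then show ?thesis
    unfolding drazin_index_def by (rule LeastI_ex)
qed

lemma mpow_left_factor_iterate:
  assumes "mpow M d = Z ** mpow M (Suc d)"
  shows "mpow M d = mpow Z j ** mpow M (d + j)"
proof (induction j)
  case (Suc j)
  have "mpow Z (Suc j) ** mpow M (d + Suc j) = Z ** (mpow Z j ** mpow M (d + j)) ** M"
    by (simp only: add_Suc_right mpow_Suc_right[of M] mpow.simps(2)[of Z] matrix_mul_assoc)
  also have "\<dots> = mpow M d"
    by (metis Suc.IH assms matrix_mul_assoc mpow_Suc_right)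
  finally show ?case ..
qed simp

lemma mpow_right_factor_iterate:
  assumes "mpow M d = mpow M (Suc d) ** Y"
  shows "mpow M d = mpow M (d + j) ** mpow Y j"
proof (induction j)
  case (Suc j)
  have "mpow M (d + Suc j) = mpow M j ** mpow M (Suc d)"
    by (metis add.commute add_Suc_right mpow_add)
  then have "mpow M (d + Suc j) ** mpow Y (Suc j) = mpow M j ** mpow M d ** mpow Y j"
    by (simp only: assms mpow.simps(2)[of Y] matrix_mul_assoc)
  also have "\<dots> = mpow M d"
    by (metis Suc.IH add.commute matrix_mul_assoc mpow_add)
  finally show ?case ..
qed simp

lemma mpow_left_factor_drazin_index:
  assumes "drazin_index M \<le> k"
  shows "\<exists>Z. mpow M k = Z ** mpow M (k + j)"
proof -
  let ?d = "drazin_index M" and ?T = "transpose M"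
  \<comment> \<open>\<open>rank\<close> is the row rank, so equal ranks yield a factorisation on the left.\<close>
  have "vec.dim (range ((*v) (mpow ?T ?d))) = vec.dim (range ((*v) (mpow ?T ?d ** ?T)))"
    using rank_mpow_drazin_index
    by (simp only: rank_eq_dim_range_transpose transpose_mpow flip: mpow_Suc_right)
  then obtain Y where "mpow ?T ?d = mpow ?T (Suc ?d) ** Y"
    using dim_range_mul_ge_imp_factor[of "mpow ?T ?d" ?T] by (auto simp only: mpow_Suc_right)
  then have "transpose (mpow ?T ?d) = transpose (mpow ?T (Suc ?d) ** Y)"
    by (rule arg_cong)
  then have "mpow M ?d = transpose Y ** mpow M (Suc ?d)"
    by (simp only: matrix_transpose_mul transpose_mpow transpose_transpose)
  then have d: "mpow M ?d = mpow (transpose Y) j ** mpow M (?d + j)"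
    by (rule mpow_left_factor_iterate)
  have "mpow M k = mpow M ?d ** mpow M (k - ?d)"
    using assms by (simp flip: mpow_add)
  also have "\<dots> = mpow (transpose Y) j ** (mpow M (?d + j) ** mpow M (k - ?d))"
    by (metis d matrix_mul_assoc)
  also have "\<dots> = mpow (transpose Y) j ** mpow M (k + j)"
    using assms by (simp add: add.commute flip: mpow_add)
  finally show ?thesis ..
qed

lemma mpow_right_factor_drazin_index:
  assumes "drazin_index M \<le> k"
  shows "\<exists>Y. mpow M k = mpow M (k + j) ** Y"
proof -
  let ?R = "range ((*v) (mpow M k))"
  obtain Z where Z: "mpow M k = Z ** mpow M (k + 1)"
    using mpow_left_factor_drazin_index[OF assms] by blast
  have "Z *v (M *v (mpow M k *v a)) = mpow M k *v a" for a
    by (metis Z Suc_eq_plus1 matrix_vector_mul_assoc mpow.simps(2))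
  \<comment> \<open>\<open>Z M\<close> is the identity on \<open>R(M\<^sup>k)\<close>, so \<open>M R(M\<^sup>k) = R(M\<^sup>k\<^sup>+\<^sup>1)\<close> has full dimension.\<close>
  then have "inj_on ((*v) M) ?R"
    by (auto intro: inj_on_inverseI[where g = "(*v) Z"])
  then have "inj_on ((*v) M) (vec.span ?R)"
    using subspace_range_matrix_vector_mult[of "mpow M k"] by (metis vec.span_eq_iff)
  then have "vec.dim ((*v) M ` ?R) = vec.dim ?R"
    by (rule vec.dim_image_eq[OF matrix_vector_mul_linear_gen])
  moreover have "(*v) M ` ?R = range ((*v) (mpow M k ** M))"
    unfolding mpow_Suc_right[symmetric] mpow.simps(2) image_image
    by (simp add: matrix_vector_mul_assoc)
  ultimately obtain Y where "mpow M k = mpow M (Suc k) ** Y"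
    using dim_range_mul_ge_imp_factor[of "mpow M k" M] by (auto simp only: mpow_Suc_right)
  then show ?thesis
    using mpow_right_factor_iterate by blast
qed

section \<open>Compressions to a complementary range\<close>

lemma mpow_eigenvector:
  assumes "M *v v = c *s v"
  shows "mpow M i *v v = c ^ i *s v"
proof (induction i)
  case (Suc i)
  have "mpow M (Suc i) *v v = M *v (c ^ i *s v)"
    by (simp add: Suc.IH flip: matrix_vector_mul_assoc)
  also have "\<dots> = c ^ Suc i *s v"
    by (simp add: assms vector_scalar_commute mult.commute)
  finally show ?case .
qed simp

lemma nilpotent_mpow_eigenvector_minus_one:
  assumes "mpow N j = 0" and eigen: "mpow N m *v v = - v"
  shows "v = 0"
proof (cases m)
  case 0
  then show ?thesis
    using eigen by (simp add: vec_eq_iff)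
next
  case (Suc m')
  have "mpow (mpow N m) j = mpow N (m * j)"
    by (rule mpow_mult[symmetric])
  also have "\<dots> = 0"
    by (rule mpow_eq_0_mono[OF assms(1)]) (simp add: Suc)
  finally have "mpow (mpow N m) j = 0" .
  moreover have "mpow (mpow N m) j *v v = (-1) ^ j *s v"
    using eigen by (intro mpow_eigenvector) (simp only: vector_sneg_minus1)
  ultimately show ?thesis
    by simp
qed

lemma mpow_compression:
  assumes "Q ** Q = Q" and "Q ** B ** Q = Q ** B"
  shows "mpow (Q ** B) j ** Q = Q ** mpow B j ** Q"
proof (induction j)
  case 0
  show ?case using assms(1) by simp
next
  case (Suc j)
  have "mpow (Q ** B) (Suc j) ** Q = Q ** B ** (mpow (Q ** B) j ** Q)"
    by (simp add: matrix_mul_assoc)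
  also have "\<dots> = Q ** B ** Q ** mpow B j ** Q"
    by (simp add: Suc matrix_mul_assoc)
  also have "\<dots> = Q ** mpow B (Suc j) ** Q"
    by (simp add: assms(2) matrix_mul_assoc)
  finally show ?case .
qed

lemma mpow_compression_nilpotent:
  assumes "Q ** Q = Q" and "Q ** B ** Q = Q ** B" and "Q ** mpow B k = 0"
  shows "mpow (Q ** B) (Suc k) = 0"
proof -
  have "mpow (Q ** B) (Suc k) = mpow (Q ** B) k ** Q ** B"
    by (simp only: mpow_Suc_right matrix_mul_assoc)
  also have "\<dots> = 0"
    by (simp add: mpow_compression[OF assms(1,2)] assms(3))
  finally show ?thesis .
qed

lemma mpow_range_kernel_drazin_index:
  assumes "drazin_index B \<le> k" and "mpow B m *v (mpow B k *v y) = 0"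
  shows "mpow B k *v y = 0"
proof -
  obtain Z where Z: "mpow B k = Z ** mpow B (m + k)"
    using mpow_left_factor_drazin_index[OF assms(1), of m] by (auto simp: add.commute)
  have "mpow B k *v y = (Z ** mpow B (m + k)) *v y"
    by (simp only: Z[symmetric])
  also have "\<dots> = Z *v (mpow B m *v (mpow B k *v y))"
    by (simp only: mpow_add matrix_vector_mul_assoc)
  finally show ?thesis
    using assms(2) by simp
qed

lemma invertible_mpow_add_complement:
  fixes B G :: "complex^'n^'n"
  assumes index: "drazin_index B \<le> k" and inner: "mpow B k ** G ** mpow B k = mpow B k"
  shows "invertible (mpow B m + mat 1 - mpow B k ** G)"
proof -
  define P where "P = mpow B k ** G"
  define Q where "Q = mat 1 - P"
  have Q_Bk: "Q ** mpow B k = 0"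
    using inner by (simp add: Q_def P_def matrix_diff_rdistrib)
  have QQ: "Q ** Q = Q"
    using inner by (simp add: Q_def P_def matrix_diff_rdistrib matrix_diff_ldistrib matrix_mul_assoc)
  have Q_Bj_P: "Q ** mpow B j ** P = 0" for j
  proof -
    have "Q ** mpow B j ** P = Q ** (mpow B j ** mpow B k) ** G"
      by (simp add: P_def matrix_mul_assoc)
    also have "\<dots> = Q ** mpow B k ** (mpow B j ** G)"
      by (metis add.commute matrix_mul_assoc mpow_add)
    finally show ?thesis
      by (simp add: Q_Bk)
  qed
  \<comment> \<open>\<open>R(P) = R(B\<^sup>k)\<close> is \<open>B\<close>-invariant.\<close>
  have "Q ** B ** Q = Q ** B ** mat 1 - Q ** B ** P"
    by (simp only: Q_def matrix_diff_ldistrib)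
  then have QBQ: "Q ** B ** Q = Q ** B"
    using Q_Bj_P[of 1] by simp
  have "\<forall>x. (mpow B m + mat 1 - P) *v x = 0 \<longrightarrow> x = 0"
  proof (intro allI impI)
    fix x assume x: "(mpow B m + mat 1 - P) *v x = 0"
    have "mpow B m + mat 1 - P = mpow B m + Q"
      by (simp add: Q_def add_diff_eq)
    then have "mpow B m *v x + Q *v x = 0"
      using x by (simp only: matrix_vector_mult_add_rdistrib)
    then have Bm_x: "mpow B m *v x = - (Q *v x)"
      by (simp add: eq_neg_iff_add_eq_0)
    define v where "v = Q *v x"
    have "Q ** mpow B m ** Q = Q ** mpow B m ** mat 1 - Q ** mpow B m ** P"
      by (simp only: Q_def matrix_diff_ldistrib)
    then have "mpow (Q ** B) m *v v = Q *v (mpow B m *v x)"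
      by (simp add: v_def matrix_vector_mul_assoc mpow_compression[OF QQ QBQ] Q_Bj_P)
    also have "\<dots> = - v"
      by (simp add: Bm_x v_def matrix_vector_mul_assoc matrix_vector_mult_uminus QQ)
    finally have "mpow (Q ** B) m *v v = - v" .
    then have "v = 0"
      by (rule nilpotent_mpow_eigenvector_minus_one[OF mpow_compression_nilpotent[OF QQ QBQ Q_Bk]])
    then have Qx: "Q *v x = 0"
      unfolding v_def .
    then have "mpow B k *v (G *v x) = x"
      by (simp add: P_def Q_def matrix_vector_mult_diff_rdistrib matrix_vector_mul_assoc)
    moreover have "mpow B m *v x = 0"
      using Bm_x Qx by simp
    ultimately show "x = 0"
      using mpow_range_kernel_drazin_index[OF index, of m "G *v x"] by simp
  qed
  then show ?thesis
    unfolding P_def by (simp add: invertible_left_inverse matrix_left_invertible_ker)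
qed

section \<open>The weighted core-EP inverse\<close>

lemma wcep_equation_solvable:
  fixes A W G :: "complex^'n^'n"
  assumes "drazin_index (W ** A) \<le> k"
  shows "\<exists>X. W ** A ** W ** X = mpow (W ** A) k ** G \<and> mrange X \<subseteq> mrange (mpow (A ** W) k)"
proof -
  obtain Y where Y: "mpow (W ** A) k = mpow (W ** A) (k + 2) ** Y"
    using mpow_right_factor_drazin_index[OF assms, of 2] by blast
  define X where "X = mpow (A ** W) k ** (A ** Y ** G)"
  have "W ** A ** W ** X = W ** mpow (A ** W) (Suc k) ** A ** Y ** G"
    by (simp add: X_def matrix_mul_assoc)
  also have "\<dots> = mpow (W ** A) (Suc k) ** (W ** A) ** Y ** G"
    by (simp only: mpow_mul_swap matrix_mul_assoc)
  also have "\<dots> = mpow (W ** A) k ** G"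
    by (simp only: Y add_2_eq_Suc' flip: mpow_Suc_right)
  finally show ?thesis
    using range_matrix_mul_subset unfolding mrange_def X_def by blast
qed

lemma wcep_equation_unique:
  fixes A W X1 X2 :: "complex^'n^'n"
  assumes "drazin_index (A ** W) \<le> k" and "W ** A ** W ** X1 = W ** A ** W ** X2"
    and "mrange X1 \<subseteq> mrange (mpow (A ** W) k)" and "mrange X2 \<subseteq> mrange (mpow (A ** W) k)"
  shows "X1 = X2"
proof -
  obtain Z where Z: "mpow (A ** W) k = Z ** mpow (A ** W) (k + 2)"
    using mpow_left_factor_drazin_index[OF assms(1), of 2] by blast
  have recover: "X = Z ** A ** (W ** A ** W ** X)" if X_range: "mrange X \<subseteq> mrange (mpow (A ** W) k)" for X
  proof -
    obtain Y where X: "X = mpow (A ** W) k ** Y"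
      using range_subset_imp_factor[OF X_range[unfolded mrange_def]] by blast
    then have "X = Z ** mpow (A ** W) (Suc (Suc k)) ** Y"
      by (simp only: Z add_2_eq_Suc')
    also have "\<dots> = Z ** A ** (W ** A ** W ** (mpow (A ** W) k ** Y))"
      by (simp add: matrix_mul_assoc)
    finally show ?thesis
      by (simp only: X)
  qed
  have "X1 = Z ** A ** (W ** A ** W ** X1)"
    using assms(3) by (rule recover)
  also have "\<dots> = Z ** A ** (W ** A ** W ** X2)"
    by (simp only: assms(2))
  also have "\<dots> = X2"
    using assms(4) by (rule recover[symmetric])
  finally show ?thesis .
qed

lemma W_A_W_wcep_inverse:
  fixes A W :: "complex^'n^'n"
  defines "k \<equiv> max (drazin_index (A ** W)) (drazin_index (W ** A))"
  shows "W ** A ** W ** wcep_inverse A W = mpow (W ** A) k ** moore_penrose (mpow (W ** A) k)"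
proof -
  let ?P = "mpow (W ** A) k ** moore_penrose (mpow (W ** A) k)"
  have "drazin_index (W ** A) \<le> k" and index: "drazin_index (A ** W) \<le> k"
    by (simp_all add: k_def)
  then obtain X0 where X0: "W ** A ** W ** X0 = ?P" "mrange X0 \<subseteq> mrange (mpow (A ** W) k)"
    using wcep_equation_solvable by blast
  have "X = X0" if "W ** A ** W ** X = ?P" "mrange X \<subseteq> mrange (mpow (A ** W) k)" for X
    by (rule wcep_equation_unique[OF index]) (simp_all add: that X0)
  then have "\<exists>!X. W ** A ** W ** X = ?P \<and> mrange X \<subseteq> mrange (mpow (A ** W) k)"
    using X0 by blast
  then show ?thesis
    unfolding wcep_inverse_def Let_def k_def[symmetric] by (rule theI'[THEN conjunct1])
qed

theorem corollary3p8:
  fixes A W :: "complex^'n^'n" and m :: nat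
  shows "invertible (mpow (W ** A) m + mat 1 - W ** A ** W ** wcep_inverse A W)"
proof -
  have "drazin_index (W ** A) \<le> max (drazin_index (A ** W)) (drazin_index (W ** A))"
    by simp
  then show ?thesis
    unfolding W_A_W_wcep_inverse by (rule invertible_mpow_add_complement[OF _ moore_penrose_inner])
qed

end
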